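(* Assume (F) and (H), and let $\varepsilon>0$. If $c\ge \max_{v\in[0,1]}f(v)-\min_{v\in[0,1]}h'(v)+2\sqrt{\varepsilon\sup_{v\in(0,1]}\frac{f(v)}{v}}$, then the problem $y'=(c+h'(v))\frac{\sqrt{y(2\varepsilon+y)}}{\varepsilon+y}-f(v)$ on $[0,1]$, $y(0)=0$, $y(1)=0$, $y>0$ on $(0,1)$, has a solution, i.e., $c$ is an admissible speed.
   Context: Assumptions. - (F): $f\in C([0,1])$, $f(0)=f(1)=0$, $f(s)>0$ for $s\in(0,1)$, and there is $k>0$ with $f(s)\le ks$ and $f(s)\le k(1-s)$ for all $s\in[0,1]$. - (H): $h\in C^2([0,1])$ with $h(0)=h'(0)=0$. *)

theory Defs
  imports "HOL-Analysis.Analysis"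
begin

end

theory Submission
  imports Defs
begin

(* Reversing the direction v -> 1 - v turns the problem into the initial value problem
   u' = f (1 - t) - (c + h' (1 - t)) Phi u, u 0 = 0, where Phi y = sqrt (y (2 eps + y)) / (eps + y),
   extended by 0 to y <= 0, is nondecreasing but not Lipschitz at 0. Since c + h' >= 0 the equation
   is dissipative: two approximate solutions with defects alpha and beta stay within (alpha + beta) t
   of each other. Approximate solutions exist because Phi = sqrt P with P Lipschitz is the uniform
   limit of the Lipschitz functions sqrt (P + delta^2), for which Picard iteration works; so they
   converge to an exact solution. Back in the variable v, the solution vanishes at v = 1 and stays
   between the barriers 0 and sqrt (eps^2 + mu^2 v^2) - eps with mu = sqrt (eps sup f(v)/v); the upper
   one is a subsolution precisely under the hypothesis on c and forces y 0 = 0. At an interior zero,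
   y' = -f < 0 would push y below 0, hence y > 0 on (0,1). *)

section \<open>Comparison principles\<close>

lemma DERIV_nonpos_where_pos_imp_nonpos:
  fixes D D' :: "real \<Rightarrow> real"
  assumes deriv: "\<And>t. t \<in> {a..b} \<Longrightarrow> (D has_real_derivative D' t) (at t within {a..b})"
    and nonpos: "\<And>t. t \<in> {a..b} \<Longrightarrow> D t > 0 \<Longrightarrow> D' t \<le> 0"
    and start: "D a \<le> 0" and v: "v \<in> {a..b}"
  shows "D v \<le> 0"
proof (rule ccontr)
  assume "\<not> D v \<le> 0"
  then have Dv: "D v > 0" by simp
  have "continuous_on {a..b} D"
    using deriv by (rule DERIV_continuous_on)
  then have cont: "continuous_on {a..v} D"
    using v by (auto intro: continuous_on_subset)
  define S where "S = {a..v} \<inter> D -` {..0}"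
  have "Sup S \<in> S"
  proof (rule closed_contains_Sup)
    show "S \<noteq> {}" using start v by (auto simp: S_def)
    show "bdd_above S" by (auto simp: S_def intro: bdd_aboveI[of _ v])
    show "closed S" unfolding S_def by (rule continuous_closed_preimage[OF cont]) auto
  qed
  define w where "w = Sup S"
  have w: "a \<le> w" "w \<le> v" "D w \<le> 0"
    using \<open>Sup S \<in> S\<close> by (auto simp: S_def w_def)
  with Dv have "w < v" by (metis order_le_less not_le)
  have pos: "D x > 0" if "w < x" "x \<le> v" for x
  proof (rule ccontr)
    assume "\<not> D x > 0"
    with that w have "x \<in> S" by (auto simp: S_def)
    then have "x \<le> w"
      unfolding w_def by (rule cSup_upper) (auto simp: S_def intro: bdd_aboveI[of _ v])
    with that show False by simp
  qed
  obtain z where z: "z \<in> {w<..<v}" "D v - D w = D' z * (v - w)"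
  proof -
    have "\<exists>z\<in>{w<..<v}. D v - D w = (*) (D' z) (v - w)"
    proof (rule mvt_simple[OF \<open>w < v\<close>])
      fix x assume "w \<le> x" "x \<le> v"
      with w v have "(D has_real_derivative D' x) (at x within {w..v})"
        by (intro DERIV_subset[OF deriv]) auto
      then show "(D has_derivative (*) (D' x)) (at x within {w..v})"
        by (simp add: has_field_derivative_def)
    qed
    with that show ?thesis by blast
  qed
  with w v pos have "D' z \<le> 0" by (intro nonpos) auto
  with \<open>w < v\<close> have "D' z * (v - w) \<le> 0" by (simp add: mult_nonpos_nonneg)
  with z w Dv show False by linarith
qed

lemma has_real_derivative_reflect:
  fixes D :: "real \<Rightarrow> real"
  assumes "(D has_real_derivative D') (at (a + b - t) within {a..b})"
  shows "((\<lambda>s. D (a + b - s)) has_real_derivative - D') (at t within {a..b})"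
proof -
  have "(D \<circ> (-) (a + b) has_real_derivative D' * -1) (at t within {a..b})"
    using assms by (intro DERIV_image_chain) (auto intro!: derivative_eq_intros)
  then show ?thesis by (simp add: o_def)
qed

lemma DERIV_nonneg_where_pos_imp_nonpos:
  fixes D D' :: "real \<Rightarrow> real"
  assumes deriv: "\<And>t. t \<in> {a..b} \<Longrightarrow> (D has_real_derivative D' t) (at t within {a..b})"
    and nonneg: "\<And>t. t \<in> {a..b} \<Longrightarrow> D t > 0 \<Longrightarrow> D' t \<ge> 0"
    and final: "D b \<le> 0" and v: "v \<in> {a..b}"
  shows "D v \<le> 0"
proof -
  have "D (a + b - (a + b - v)) \<le> 0"
  proof (rule DERIV_nonpos_where_pos_imp_nonpos[where D = "\<lambda>s. D (a + b - s)"
        and D' = "\<lambda>s. - D' (a + b - s)" and v = "a + b - v"])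
    show "((\<lambda>s. D (a + b - s)) has_real_derivative - D' (a + b - t)) (at t within {a..b})"
      if "t \<in> {a..b}" for t
      using that by (intro has_real_derivative_reflect deriv) auto
  qed (use nonneg final v in auto)
  then show ?thesis by simp
qed

lemma abs_diff_le_if_abs_DERIV_le:
  fixes F G F' G' :: "real \<Rightarrow> real"
  assumes F: "\<And>t. t \<in> {a..b} \<Longrightarrow> (F has_real_derivative F' t) (at t within {a..b})"
    and G: "\<And>t. t \<in> {a..b} \<Longrightarrow> (G has_real_derivative G' t) (at t within {a..b})"
    and le: "\<And>t. t \<in> {a..b} \<Longrightarrow> \<bar>F' t\<bar> \<le> G' t"
    and t: "t \<in> {a..b}"
  shows "\<bar>F t - F a\<bar> \<le> G t - G a"
proof -
  have "\<sigma> * (F t - F a) - (G t - G a) \<le> 0" if "\<sigma> = 1 \<or> \<sigma> = -1" for \<sigma> :: real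
  proof (rule DERIV_nonpos_where_pos_imp_nonpos[OF _ _ _ t])
    fix s assume "s \<in> {a..b}"
    show "((\<lambda>s. \<sigma> * (F s - F a) - (G s - G a)) has_real_derivative \<sigma> * F' s - G' s)
      (at s within {a..b})"
      using F G \<open>s \<in> {a..b}\<close> by (auto intro!: derivative_eq_intros)
    show "\<sigma> * F' s - G' s \<le> 0"
      using le[OF \<open>s \<in> {a..b}\<close>] that by auto
  qed simp
  from this[of 1] this[of "-1"] show ?thesis by (simp add: abs_le_iff)
qed

section \<open>Initial value problems with a monotone nonlinearity\<close>

lemma approx_solutions_diff_le:
  fixes p q \<Phi> w z w' z' :: "real \<Rightarrow> real"
  assumes q: "\<And>t. t \<in> {a..b} \<Longrightarrow> 0 \<le> q t" and "mono \<Phi>"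
    and w: "\<And>t. t \<in> {a..b} \<Longrightarrow> (w has_real_derivative w' t) (at t within {a..b})"
    and z: "\<And>t. t \<in> {a..b} \<Longrightarrow> (z has_real_derivative z' t) (at t within {a..b})"
    and w_err: "\<And>t. t \<in> {a..b} \<Longrightarrow> \<bar>w' t - (p t - q t * \<Phi> (w t))\<bar> \<le> \<alpha>"
    and z_err: "\<And>t. t \<in> {a..b} \<Longrightarrow> \<bar>z' t - (p t - q t * \<Phi> (z t))\<bar> \<le> \<beta>"
    and "w a = z a" and t: "t \<in> {a..b}"
  shows "w t - z t \<le> (\<alpha> + \<beta>) * (t - a)"
proof -
  have "w t - z t - (\<alpha> + \<beta>) * (t - a) \<le> 0"
  proof (rule DERIV_nonpos_where_pos_imp_nonpos[OF _ _ _ t])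
    fix s assume s: "s \<in> {a..b}"
    show "((\<lambda>s. w s - z s - (\<alpha> + \<beta>) * (s - a)) has_real_derivative w' s - z' s - (\<alpha> + \<beta>))
      (at s within {a..b})"
      using w[OF s] z[OF s] by (auto intro!: derivative_eq_intros)
    assume "w s - z s - (\<alpha> + \<beta>) * (s - a) > 0"
    moreover have "0 \<le> \<alpha> + \<beta>"
      using w_err[OF s] z_err[OF s] by linarith
    with s have "0 \<le> (\<alpha> + \<beta>) * (s - a)" by simp
    ultimately have "z s \<le> w s" by linarith
    then have "q s * \<Phi> (z s) \<le> q s * \<Phi> (w s)"
      using \<open>mono \<Phi>\<close> q[OF s] by (simp add: mono_def mult_left_mono)
    with w_err[OF s] z_err[OF s] show "w' s - z' s - (\<alpha> + \<beta>) \<le> 0"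
      by (simp add: abs_le_iff)
  qed (simp add: \<open>w a = z a\<close>)
  then show ?thesis by simp
qed

lemma approx_solutions_dist_le:
  fixes p q \<Phi> w z w' z' :: "real \<Rightarrow> real"
  assumes "\<And>t. t \<in> {a..b} \<Longrightarrow> 0 \<le> q t" and "mono \<Phi>"
    and "\<And>t. t \<in> {a..b} \<Longrightarrow> (w has_real_derivative w' t) (at t within {a..b})"
    and "\<And>t. t \<in> {a..b} \<Longrightarrow> (z has_real_derivative z' t) (at t within {a..b})"
    and "\<And>t. t \<in> {a..b} \<Longrightarrow> \<bar>w' t - (p t - q t * \<Phi> (w t))\<bar> \<le> \<alpha>"
    and "\<And>t. t \<in> {a..b} \<Longrightarrow> \<bar>z' t - (p t - q t * \<Phi> (z t))\<bar> \<le> \<beta>"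
    and "w a = z a" and "t \<in> {a..b}"
  shows "\<bar>w t - z t\<bar> \<le> (\<alpha> + \<beta>) * (t - a)"
  using approx_solutions_diff_le[of a b q \<Phi> w w' z z' p \<alpha> \<beta> t]
    approx_solutions_diff_le[of a b q \<Phi> z z' w w' p \<beta> \<alpha> t] assms
  by (simp add: abs_le_iff add.commute)

lemma continuous_on_Icc_abs_bound:
  fixes g :: "real \<Rightarrow> real"
  assumes "continuous_on {a..b} g"
  obtains B where "\<And>t. t \<in> {a..b} \<Longrightarrow> \<bar>g t\<bar> \<le> B"
  using compact_continuous_image[OF assms compact_Icc]
  by (metis bounded_iff compact_imp_bounded image_eqI real_norm_def)

lemma lipschitz_rhs_diff_le:
  fixes \<Psi> :: "real \<Rightarrow> real"
  assumes "K-lipschitz_on UNIV \<Psi>" and "\<bar>q\<bar> \<le> Q"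
  shows "\<bar>(p - q * \<Psi> y) - (p - q * \<Psi> z)\<bar> \<le> Q * K * \<bar>y - z\<bar>"
proof -
  have "\<bar>(p - q * \<Psi> y) - (p - q * \<Psi> z)\<bar> = \<bar>q\<bar> * \<bar>\<Psi> y - \<Psi> z\<bar>"
    by (simp add: abs_mult[symmetric] algebra_simps)
  also have "\<dots> \<le> Q * (K * \<bar>y - z\<bar>)"
    using lipschitz_onD[OF assms(1), of y z] assms(2)
    by (intro mult_mono) (auto simp: dist_real_def)
  finally show ?thesis
    by (simp add: mult.assoc)
qed

lemma picard_step_dist_le:
  fixes p q \<Psi> v w v' w' :: "real \<Rightarrow> real"
  assumes "K-lipschitz_on UNIV \<Psi>" and Q: "\<And>t. t \<in> {0..1} \<Longrightarrow> \<bar>q t\<bar> \<le> Q"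
    and v': "\<And>t. t \<in> {0..1} \<Longrightarrow> (v' has_real_derivative p t - q t * \<Psi> (v t)) (at t within {0..1})"
    and w': "\<And>t. t \<in> {0..1} \<Longrightarrow> (w' has_real_derivative p t - q t * \<Psi> (w t)) (at t within {0..1})"
    and "v' 0 = w' 0"
    and dist: "\<And>t. t \<in> {0..1} \<Longrightarrow> \<bar>v t - w t\<bar> \<le> C * t ^ n / fact n"
    and t: "t \<in> {0..1}"
  shows "\<bar>v' t - w' t\<bar> \<le> Q * K * C * t ^ Suc n / fact (Suc n)"
proof -
  have "\<bar>(v' t - w' t) - (v' 0 - w' 0)\<bar>
      \<le> Q * K * C * t ^ Suc n / fact (Suc n) - Q * K * C * 0 ^ Suc n / fact (Suc n)"
  proof (rule abs_diff_le_if_abs_DERIV_le[OF _ _ _ t])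
    fix s :: real assume s: "s \<in> {0..1}"
    show "((\<lambda>s. v' s - w' s) has_real_derivative
        (p s - q s * \<Psi> (v s)) - (p s - q s * \<Psi> (w s))) (at s within {0..1})"
      using v'[OF s] w'[OF s] by (rule DERIV_diff)
    have "((\<lambda>s. s ^ Suc n) has_real_derivative real (Suc n) * s ^ n) (at s within {0..1})"
      using DERIV_pow[of "Suc n" s] by simp
    from DERIV_cmult[OF DERIV_cdivide[OF this, of "fact (Suc n)"], of "Q * K * C"]
    show "((\<lambda>s. Q * K * C * s ^ Suc n / fact (Suc n)) has_real_derivative
        Q * K * C * s ^ n / fact n) (at s within {0..1})"
      by (simp add: fact_Suc del: of_nat_Suc)
    have "0 \<le> Q * K"
      using Q[of 0] lipschitz_on_nonneg[OF assms(1)] by auto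
    have "\<bar>(p s - q s * \<Psi> (v s)) - (p s - q s * \<Psi> (w s))\<bar> \<le> Q * K * \<bar>v s - w s\<bar>"
      by (rule lipschitz_rhs_diff_le[OF assms(1) Q[OF s]])
    also have "\<dots> \<le> Q * K * (C * s ^ n / fact n)"
      using dist[OF s] \<open>0 \<le> Q * K\<close> by (rule mult_left_mono)
    finally show "\<bar>(p s - q s * \<Psi> (v s)) - (p s - q s * \<Psi> (w s))\<bar> \<le> Q * K * C * s ^ n / fact n"
      by simp
  qed
  with \<open>v' 0 = w' 0\<close> show ?thesis by simp
qed

lemma picard_iterates_dist_le:
  fixes p q \<Psi> :: "real \<Rightarrow> real" and x :: "nat \<Rightarrow> real \<Rightarrow> real"
  assumes \<Psi>: "K-lipschitz_on UNIV \<Psi>" and Q: "\<And>t. t \<in> {0..1} \<Longrightarrow> \<bar>q t\<bar> \<le> Q"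
    and B: "\<And>t. t \<in> {0..1} \<Longrightarrow> \<bar>p t - q t * \<Psi> u0\<bar> \<le> B"
    and x0: "x 0 = (\<lambda>t. u0)" and x_init: "\<And>k. x k 0 = u0"
    and x_deriv: "\<And>k t. t \<in> {0..1} \<Longrightarrow>
      (x (Suc k) has_real_derivative p t - q t * \<Psi> (x k t)) (at t within {0..1})"
    and t: "t \<in> {0..1}"
  shows "\<bar>x (Suc k) t - x k t\<bar> \<le> B * (Q * K) ^ k * t ^ Suc k / fact (Suc k)"
  using t
proof (induction k arbitrary: t)
  case 0
  have "\<bar>x 1 t - x 1 0\<bar> \<le> B * t - B * 0"
  proof (rule abs_diff_le_if_abs_DERIV_le[OF _ _ _ 0])
    show "(x 1 has_real_derivative p s - q s * \<Psi> u0) (at s within {0..1})" if "s \<in> {0..1}" for s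
      using x_deriv[OF that, of 0] by (simp add: x0)
  qed (auto intro!: derivative_eq_intros B)
  then show ?case by (simp add: x0 x_init)
next
  case (Suc k)
  have "\<bar>x (Suc (Suc k)) t - x (Suc k) t\<bar>
      \<le> Q * K * (B * (Q * K) ^ k) * t ^ Suc (Suc k) / fact (Suc (Suc k))"
    by (rule picard_step_dist_le[OF \<Psi> Q x_deriv x_deriv _ Suc.IH Suc.prems]) (simp_all add: x_init)
  then show ?case by (simp add: ac_simps)
qed

lemma picard_iterates_exist:
  fixes p q \<Psi> :: "real \<Rightarrow> real"
  assumes p: "continuous_on {0..1} p" and q: "continuous_on {0..1} q"
    and \<Psi>: "K-lipschitz_on UNIV \<Psi>"
  obtains x :: "nat \<Rightarrow> real \<Rightarrow> real" where "x 0 = (\<lambda>t. u0)" and "\<And>k. x k 0 = u0"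
    and "\<And>k t. t \<in> {0..1} \<Longrightarrow>
      (x (Suc k) has_real_derivative p t - q t * \<Psi> (x k t)) (at t within {0..1})"
proof -
  define T where "T w t = u0 + integral {0..t} (\<lambda>s. p s - q s * \<Psi> (w s))" for w t
  have T_deriv: "(T w has_real_derivative p t - q t * \<Psi> (w t)) (at t within {0..1})"
    if w: "continuous_on {0..1} w" and t: "t \<in> {0..1}" for w t
  proof -
    have "continuous_on {0..1} (\<lambda>s. p s - q s * \<Psi> (w s))"
      by (intro continuous_intros p q continuous_on_compose2[OF lipschitz_on_continuous_on[OF \<Psi>] w])
        auto
    from integral_has_real_derivative[OF this t] show ?thesis
      unfolding T_def by (auto intro!: derivative_eq_intros)
  qed
  define x where "x k = (T ^^ k) (\<lambda>t. u0)" for k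
  have x_cont: "continuous_on {0..1} (x k)" for k
  proof (induction k)
    case (Suc k)
    then show ?case
      unfolding x_def by (auto intro: DERIV_continuous_on T_deriv)
  qed (simp add: x_def)
  have x_deriv: "(x (Suc k) has_real_derivative p t - q t * \<Psi> (x k t)) (at t within {0..1})"
    if "t \<in> {0..1}" for k t
    using T_deriv[OF x_cont that] by (simp add: x_def)
  have x_init: "x k 0 = u0" for k
    by (cases k) (simp_all add: x_def T_def)
  have "x 0 = (\<lambda>t. u0)"
    by (simp add: x_def)
  then show ?thesis
    using x_init x_deriv by (rule that)
qed

lemma lipschitz_ode_approx_solution:
  fixes p q \<Psi> :: "real \<Rightarrow> real"
  assumes p: "continuous_on {0..1} p" and q: "continuous_on {0..1} q"
    and \<Psi>: "K-lipschitz_on UNIV \<Psi>" and "\<eta> > 0"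
  shows "\<exists>w w'. w 0 = u0 \<and> (\<forall>t\<in>{0..1}. (w has_real_derivative w' t) (at t within {0..1})
           \<and> \<bar>w' t - (p t - q t * \<Psi> (w t))\<bar> \<le> \<eta>)"
proof -
  obtain Q where Q: "\<And>t. t \<in> {0..1} \<Longrightarrow> \<bar>q t\<bar> \<le> Q"
    using continuous_on_Icc_abs_bound[OF q] by blast
  have "continuous_on {0..1} (\<lambda>t. p t - q t * \<Psi> u0)"
    by (intro continuous_intros p q)
  then obtain B where B: "\<And>t. t \<in> {0..1} \<Longrightarrow> \<bar>p t - q t * \<Psi> u0\<bar> \<le> B"
    using continuous_on_Icc_abs_bound by blast
  have "0 \<le> Q" "0 \<le> K" "0 \<le> B"
    using Q[of 0] B[of 0] lipschitz_on_nonneg[OF \<Psi>] by auto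
  obtain x where "x 0 = (\<lambda>t. u0)" and x_init: "\<And>k. x k 0 = u0" and x_deriv: "\<And>k t. t \<in> {0..1} \<Longrightarrow>
      (x (Suc k) has_real_derivative p t - q t * \<Psi> (x k t)) (at t within {0..1})"
    using picard_iterates_exist[OF p q \<Psi>] by blast
  (* A late Picard iterate is already an approximate solution: its defect is controlled by the
     distance between consecutive iterates, which decays like (Q K)^N / N!. *)
  have x_dist: "\<bar>x (Suc k) t - x k t\<bar> \<le> B * (Q * K) ^ k * t ^ Suc k / fact (Suc k)"
    if "t \<in> {0..1}" for k t
    by (rule picard_iterates_dist_le[OF \<Psi> Q B \<open>x 0 = (\<lambda>t. u0)\<close> x_init x_deriv that])
  have "(\<lambda>n. B * (inverse (fact n) * (Q * K) ^ n)) \<longlonglongrightarrow> B * 0"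
    by (intro tendsto_intros summable_LIMSEQ_zero[OF summable_exp])
  then have "\<forall>\<^sub>F n in sequentially. B * (inverse (fact n) * (Q * K) ^ n) < \<eta>"
    using \<open>\<eta> > 0\<close> by (intro order_tendstoD) auto
  then obtain N where N: "B * (inverse (fact (Suc N)) * (Q * K) ^ Suc N) < \<eta>"
    unfolding eventually_sequentially by (meson le_SucI order_refl)
  show ?thesis
  proof (intro exI conjI ballI)
    fix t :: real assume t: "t \<in> {0..1}"
    show "(x (Suc N) has_real_derivative p t - q t * \<Psi> (x N t)) (at t within {0..1})"
      using x_deriv[OF t] .
    have "\<bar>(p t - q t * \<Psi> (x N t)) - (p t - q t * \<Psi> (x (Suc N) t))\<bar>
        \<le> Q * K * \<bar>x (Suc N) t - x N t\<bar>"
      using lipschitz_rhs_diff_le[OF \<Psi> Q[OF t]] by (simp add: abs_minus_commute)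
    also have "\<dots> \<le> Q * K * (B * (Q * K) ^ N / fact (Suc N))"
    proof -
      have "t ^ Suc N \<le> 1"
        using t by (intro power_le_one) auto
      then have "B * (Q * K) ^ N * t ^ Suc N / fact (Suc N) \<le> B * (Q * K) ^ N / fact (Suc N)"
        using \<open>0 \<le> Q\<close> \<open>0 \<le> K\<close> \<open>0 \<le> B\<close> by (intro divide_right_mono mult_left_le) auto
      with x_dist[OF t, of N] show ?thesis
        using \<open>0 \<le> Q\<close> \<open>0 \<le> K\<close> by (intro mult_left_mono) auto
    qed
    also have "\<dots> < \<eta>"
      using N by (simp add: field_simps)
    finally show "\<bar>(p t - q t * \<Psi> (x N t)) - (p t - q t * \<Psi> (x (Suc N) t))\<bar> \<le> \<eta>"
      by simp
  qed (rule x_init)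
qed

definition lipschitz_approximable :: "(real \<Rightarrow> real) \<Rightarrow> bool" where
  "lipschitz_approximable \<Phi> \<longleftrightarrow>
     (\<forall>\<delta>>0. \<exists>\<Psi> K. K-lipschitz_on UNIV \<Psi> \<and> (\<forall>x. \<bar>\<Psi> x - \<Phi> x\<bar> \<le> \<delta>))"

lemma lipschitz_approximable_imp_uniformly_continuous:
  assumes "lipschitz_approximable \<Phi>"
  shows "uniformly_continuous_on UNIV \<Phi>"
  unfolding uniformly_continuous_on_def
proof (intro allI impI)
  fix e :: real assume "e > 0"
  then have "e / 3 > 0"
    by simp
  then obtain \<Psi> K where \<Psi>: "K-lipschitz_on UNIV \<Psi>" and approx: "\<And>x. \<bar>\<Psi> x - \<Phi> x\<bar> \<le> e / 3"
    using assms unfolding lipschitz_approximable_def by blast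
  have "0 \<le> K"
    using \<Psi> by (rule lipschitz_on_nonneg)
  show "\<exists>d>0. \<forall>x\<in>UNIV. \<forall>x'\<in>UNIV. dist x' x < d \<longrightarrow> dist (\<Phi> x') (\<Phi> x) < e"
  proof (intro exI conjI ballI impI)
    show "e / (3 * (K + 1)) > 0"
      using \<open>e > 0\<close> \<open>0 \<le> K\<close> by simp
    fix x x' :: real assume "dist x' x < e / (3 * (K + 1))"
    then have "K * dist x' x \<le> K * (e / (3 * (K + 1)))"
      using \<open>0 \<le> K\<close> by (intro mult_left_mono) auto
    also have "\<dots> < e / 3"
      using \<open>e > 0\<close> \<open>0 \<le> K\<close> by (simp add: field_simps)
    finally have "dist (\<Psi> x') (\<Psi> x) < e / 3"
      using lipschitz_onD[OF \<Psi>, of x' x] by simp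
    with approx[of x] approx[of x'] show "dist (\<Phi> x') (\<Phi> x) < e"
      unfolding dist_real_def by linarith
  qed
qed

lemma abs_defect_le:
  fixes w' p q y z :: real
  shows "\<bar>w' - (p - q * z)\<bar> \<le> \<bar>w' - (p - q * y)\<bar> + \<bar>q\<bar> * \<bar>y - z\<bar>"
proof -
  have "w' - (p - q * z) = (w' - (p - q * y)) + q * (z - y)"
    by (simp add: algebra_simps)
  then have "\<bar>w' - (p - q * z)\<bar> \<le> \<bar>w' - (p - q * y)\<bar> + \<bar>q * (z - y)\<bar>"
    by (metis abs_triangle_ineq)
  then show ?thesis
    by (simp add: abs_mult abs_minus_commute)
qed

lemma lipschitz_approximable_ode_approx_solution:
  fixes p q \<Phi> :: "real \<Rightarrow> real"
  assumes p: "continuous_on {0..1} p" and q: "continuous_on {0..1} q"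
    and "lipschitz_approximable \<Phi>" and "\<eta> > 0"
  shows "\<exists>w w'. w 0 = u0 \<and> (\<forall>t\<in>{0..1}. (w has_real_derivative w' t) (at t within {0..1})
           \<and> \<bar>w' t - (p t - q t * \<Phi> (w t))\<bar> \<le> \<eta>)"
proof -
  obtain Q where Q: "\<And>t. t \<in> {0..1} \<Longrightarrow> \<bar>q t\<bar> \<le> Q"
    using continuous_on_Icc_abs_bound[OF q] by blast
  have "0 \<le> Q"
    using Q[of 0] by auto
  have "\<eta> / (2 * (Q + 1)) > 0"
    using \<open>\<eta> > 0\<close> \<open>0 \<le> Q\<close> by simp
  then obtain \<Psi> K where \<Psi>: "K-lipschitz_on UNIV \<Psi>"
    and approx: "\<And>x. \<bar>\<Psi> x - \<Phi> x\<bar> \<le> \<eta> / (2 * (Q + 1))"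
    using \<open>lipschitz_approximable \<Phi>\<close> unfolding lipschitz_approximable_def by blast
  have "\<eta> / 2 > 0"
    using \<open>\<eta> > 0\<close> by simp
  then obtain w w' where "w 0 = u0" and w: "\<And>t. t \<in> {0..1} \<Longrightarrow>
      (w has_real_derivative w' t) (at t within {0..1}) \<and> \<bar>w' t - (p t - q t * \<Psi> (w t))\<bar> \<le> \<eta> / 2"
    using lipschitz_ode_approx_solution[OF p q \<Psi>] by blast
  show ?thesis
  proof (intro exI conjI ballI)
    fix t :: real assume t: "t \<in> {0..1}"
    show "(w has_real_derivative w' t) (at t within {0..1})"
      using w[OF t] by blast
    have "\<bar>q t\<bar> * \<bar>\<Psi> (w t) - \<Phi> (w t)\<bar> \<le> Q * (\<eta> / (2 * (Q + 1)))"
      using Q[OF t] approx \<open>0 \<le> Q\<close> by (intro mult_mono) auto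
    also have "\<dots> \<le> \<eta> / 2"
      using \<open>0 \<le> Q\<close> \<open>\<eta> > 0\<close> by (simp add: field_simps)
    finally show "\<bar>w' t - (p t - q t * \<Phi> (w t))\<bar> \<le> \<eta>"
      using w[OF t] abs_defect_le[of "w' t" "p t" "q t" "\<Phi> (w t)" "\<Psi> (w t)"] by linarith
  qed (rule \<open>w 0 = u0\<close>)
qed

lemma has_real_derivative_uniform_limit:
  fixes f f' :: "nat \<Rightarrow> real \<Rightarrow> real" and g g' :: "real \<Rightarrow> real"
  assumes "convex S"
    and f: "\<And>n x. x \<in> S \<Longrightarrow> (f n has_real_derivative f' n x) (at x within S)"
    and lim: "\<And>x. x \<in> S \<Longrightarrow> (\<lambda>n. f n x) \<longlonglongrightarrow> g x"
    and unif: "\<And>e. e > 0 \<Longrightarrow> \<forall>\<^sub>F n in sequentially. \<forall>x\<in>S. \<bar>f' n x - g' x\<bar> \<le> e"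
    and x: "x \<in> S"
  shows "(g has_real_derivative g' x) (at x within S)"
proof -
  have "\<exists>h. \<forall>x\<in>S. (\<lambda>n. f n x) \<longlonglongrightarrow> h x \<and> (h has_derivative (*) (g' x)) (at x within S)"
  proof (rule has_derivative_sequence[where f = f and f' = "\<lambda>n y. (*) (f' n y)"
        and g' = "\<lambda>y. (*) (g' y)", OF \<open>convex S\<close> _ _ x lim[OF x]])
    show "(f n has_derivative (*) (f' n y)) (at y within S)" if "y \<in> S" for n y
      using f[OF that] by (simp add: has_field_derivative_def)
    show "\<forall>\<^sub>F n in sequentially. \<forall>y\<in>S. \<forall>h. norm (f' n y * h - g' y * h) \<le> e * norm h"
      if "e > 0" for e
      using unif[OF that]
    proof eventually_elim
      case (elim n)
      show ?case
      proof (intro ballI allI)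
        fix y h assume "y \<in> S"
        have "norm (f' n y * h - g' y * h) = \<bar>f' n y - g' y\<bar> * \<bar>h\<bar>"
          by (simp add: abs_mult left_diff_distrib[symmetric])
        also have "\<dots> \<le> e * norm h"
          using elim \<open>y \<in> S\<close> by (simp add: mult_right_mono)
        finally show "norm (f' n y * h - g' y * h) \<le> e * norm h" .
      qed
    qed
  qed
  then obtain h where h: "\<And>y. y \<in> S \<Longrightarrow> (\<lambda>n. f n y) \<longlonglongrightarrow> h y"
    and "(h has_derivative (*) (g' x)) (at x within S)"
    using x by blast
  then have "(h has_real_derivative g' x) (at x within S)"
    by (simp add: has_field_derivative_def)
  moreover have "h y = g y" if "y \<in> S" for y
    using LIMSEQ_unique[OF h[OF that] lim[OF that]] .
  ultimately show ?thesis
    using has_field_derivative_transform_within[OF _ zero_less_one x] by blast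
qed

lemma approx_solutions_uniform_limit:
  fixes p q \<Phi> :: "real \<Rightarrow> real" and W W' :: "nat \<Rightarrow> real \<Rightarrow> real"
  assumes q: "\<And>t. t \<in> {0..1} \<Longrightarrow> 0 \<le> q t" and "mono \<Phi>"
    and W: "\<And>n t. t \<in> {0..1} \<Longrightarrow> (W n has_real_derivative W' n t) (at t within {0..1})"
    and W_err: "\<And>n t. t \<in> {0..1} \<Longrightarrow> \<bar>W' n t - (p t - q t * \<Phi> (W n t))\<bar> \<le> \<eta> n"
    and W_init: "\<And>n. W n 0 = u0" and "\<eta> \<longlonglongrightarrow> 0"
  obtains U where "\<And>n t. t \<in> {0..1} \<Longrightarrow> \<bar>W n t - U t\<bar> \<le> \<eta> n"
proof
  have dist: "\<bar>W m t - W n t\<bar> \<le> \<eta> m + \<eta> n" if t: "t \<in> {0..1}" for m n t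
  proof -
    have "\<bar>W m t - W n t\<bar> \<le> (\<eta> m + \<eta> n) * (t - 0)"
      by (rule approx_solutions_dist_le[OF q \<open>mono \<Phi>\<close> W W W_err W_err _ t]) (simp_all add: W_init)
    also have "\<dots> \<le> \<eta> m + \<eta> n"
      using t W_err[OF t, of m] W_err[OF t, of n] by (intro mult_left_le) auto
    finally show ?thesis .
  qed
  have "convergent (\<lambda>n. W n t)" if t: "t \<in> {0..1}" for t
  proof (rule Cauchy_convergent, rule metric_CauchyI)
    fix e :: real assume "e > 0"
    then have "\<forall>\<^sub>F n in sequentially. \<eta> n < e / 2"
      using \<open>\<eta> \<longlonglongrightarrow> 0\<close> by (intro order_tendstoD) auto
    then obtain M where M: "\<And>n. n \<ge> M \<Longrightarrow> \<eta> n < e / 2"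
      unfolding eventually_sequentially by blast
    show "\<exists>M. \<forall>m\<ge>M. \<forall>n\<ge>M. dist (W m t) (W n t) < e"
    proof (intro exI allI impI)
      fix m n assume "M \<le> m" "M \<le> n"
      with M[of m] M[of n] dist[OF t, of m n] show "dist (W m t) (W n t) < e"
        unfolding dist_real_def by linarith
    qed
  qed
  then have lim: "(\<lambda>n. W n t) \<longlonglongrightarrow> lim (\<lambda>n. W n t)" if "t \<in> {0..1}" for t
    using that by (simp add: convergent_LIMSEQ_iff)
  fix n and t :: real assume t: "t \<in> {0..1}"
  have "(\<lambda>m. \<bar>W n t - W m t\<bar>) \<longlonglongrightarrow> \<bar>W n t - lim (\<lambda>m. W m t)\<bar>"
    by (intro tendsto_intros lim t)
  moreover have "(\<lambda>m. \<eta> n + \<eta> m) \<longlonglongrightarrow> \<eta> n + 0"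
    by (intro tendsto_intros \<open>\<eta> \<longlonglongrightarrow> 0\<close>)
  ultimately show "\<bar>W n t - lim (\<lambda>m. W m t)\<bar> \<le> \<eta> n"
    using dist[OF t, of n] by (auto intro: LIMSEQ_le)
qed

lemma approx_solutions_deriv_uniform_limit:
  fixes p q \<Phi> U :: "real \<Rightarrow> real" and W W' :: "nat \<Rightarrow> real \<Rightarrow> real"
  assumes q: "continuous_on {0..1} q" and "uniformly_continuous_on UNIV \<Phi>"
    and W_err: "\<And>n t. t \<in> {0..1} \<Longrightarrow> \<bar>W' n t - (p t - q t * \<Phi> (W n t))\<bar> \<le> \<eta> n"
    and U: "\<And>n t. t \<in> {0..1} \<Longrightarrow> \<bar>W n t - U t\<bar> \<le> \<eta> n"
    and "\<eta> \<longlonglongrightarrow> 0" and "e > 0"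
  shows "\<forall>\<^sub>F n in sequentially. \<forall>t\<in>{0..1}. \<bar>W' n t - (p t - q t * \<Phi> (U t))\<bar> \<le> e"
proof -
  obtain Q where Q: "\<And>t. t \<in> {0..1} \<Longrightarrow> \<bar>q t\<bar> \<le> Q"
    using continuous_on_Icc_abs_bound[OF q] by blast
  have "0 \<le> Q"
    using Q[of 0] by auto
  then have "e / (2 * (Q + 1)) > 0"
    using \<open>e > 0\<close> by simp
  then obtain d where "d > 0" and d: "\<And>x y. \<bar>x - y\<bar> < d \<Longrightarrow> \<bar>\<Phi> x - \<Phi> y\<bar> < e / (2 * (Q + 1))"
    using \<open>uniformly_continuous_on UNIV \<Phi>\<close> unfolding uniformly_continuous_on_def dist_real_def
    by blast
  have "\<forall>\<^sub>F n in sequentially. \<eta> n < min d (e / 2)"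
    using \<open>\<eta> \<longlonglongrightarrow> 0\<close> \<open>d > 0\<close> \<open>e > 0\<close> by (intro order_tendstoD) auto
  then show ?thesis
  proof eventually_elim
    case (elim n)
    show ?case
    proof
      fix t :: real assume t: "t \<in> {0..1}"
      have "\<bar>q t\<bar> * \<bar>\<Phi> (W n t) - \<Phi> (U t)\<bar> \<le> Q * (e / (2 * (Q + 1)))"
        using Q[OF t] d[of "W n t" "U t"] U[OF t, of n] elim \<open>0 \<le> Q\<close>
        by (intro mult_mono) auto
      also have "\<dots> \<le> e / 2"
        using \<open>0 \<le> Q\<close> \<open>e > 0\<close> by (simp add: field_simps)
      finally show "\<bar>W' n t - (p t - q t * \<Phi> (U t))\<bar> \<le> e"
        using W_err[OF t, of n] elim abs_defect_le[of "W' n t" "p t" "q t" "\<Phi> (U t)" "\<Phi> (W n t)"]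
        by linarith
    qed
  qed
qed

lemma monotone_ode_solution:
  fixes p q \<Phi> :: "real \<Rightarrow> real"
  assumes p: "continuous_on {0..1} p" and q: "continuous_on {0..1} q"
    and q_nonneg: "\<And>t. t \<in> {0..1} \<Longrightarrow> 0 \<le> q t"
    and "mono \<Phi>" and "lipschitz_approximable \<Phi>"
  obtains u where "u 0 = u0"
    and "\<And>t. t \<in> {0..1} \<Longrightarrow> (u has_real_derivative p t - q t * \<Phi> (u t)) (at t within {0..1})"
proof -
  define \<eta> :: "nat \<Rightarrow> real" where "\<eta> n = inverse (real (Suc n))" for n
  have "\<eta> \<longlonglongrightarrow> 0"
    unfolding \<eta>_def by (rule LIMSEQ_inverse_real_of_nat)
  have "\<forall>n. \<exists>w w'. w 0 = u0 \<and> (\<forall>t\<in>{0..1}. (w has_real_derivative w' t) (at t within {0..1})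
           \<and> \<bar>w' t - (p t - q t * \<Phi> (w t))\<bar> \<le> \<eta> n)"
    using lipschitz_approximable_ode_approx_solution[OF p q \<open>lipschitz_approximable \<Phi>\<close>]
    by (simp add: \<eta>_def)
  then obtain W W' where W_init: "\<And>n. W n 0 = u0"
    and W: "\<And>n t. t \<in> {0..1} \<Longrightarrow> (W n has_real_derivative W' n t) (at t within {0..1})"
    and W_err: "\<And>n t. t \<in> {0..1} \<Longrightarrow> \<bar>W' n t - (p t - q t * \<Phi> (W n t))\<bar> \<le> \<eta> n"
    by metis
  obtain U where U: "\<And>n t. t \<in> {0..1} \<Longrightarrow> \<bar>W n t - U t\<bar> \<le> \<eta> n"
    using approx_solutions_uniform_limit[OF q_nonneg \<open>mono \<Phi>\<close> W W_err W_init \<open>\<eta> \<longlonglongrightarrow> 0\<close>]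
    by blast
  have lim: "(\<lambda>n. W n t) \<longlonglongrightarrow> U t" if "t \<in> {0..1}" for t
  proof (rule LIM_zero_cancel, rule Lim_null_comparison[OF _ \<open>\<eta> \<longlonglongrightarrow> 0\<close>])
    show "\<forall>\<^sub>F n in sequentially. norm (W n t - U t) \<le> \<eta> n"
      using U[OF that] by simp
  qed
  have W'_unif: "\<forall>\<^sub>F n in sequentially. \<forall>t\<in>{0..1}. \<bar>W' n t - (p t - q t * \<Phi> (U t))\<bar> \<le> e"
    if "e > 0" for e
    using approx_solutions_deriv_uniform_limit[OF q
        lipschitz_approximable_imp_uniformly_continuous[OF \<open>lipschitz_approximable \<Phi>\<close>]
        W_err U \<open>\<eta> \<longlonglongrightarrow> 0\<close> that] .
  show ?thesis
  proof (rule that)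
    show "U 0 = u0"
      using LIMSEQ_unique[OF lim[of 0]] W_init by simp
    show "(U has_real_derivative p t - q t * \<Phi> (U t)) (at t within {0..1})" if "t \<in> {0..1}" for t
      by (rule has_real_derivative_uniform_limit[OF convex_real_interval(5) W lim W'_unif that])
  qed
qed

lemma monotone_ode_terminal_solution:
  fixes p q \<Phi> :: "real \<Rightarrow> real"
  assumes p: "continuous_on {0..1} p" and q: "continuous_on {0..1} q"
    and q_nonneg: "\<And>t. t \<in> {0..1} \<Longrightarrow> 0 \<le> q t"
    and "mono \<Phi>" and "lipschitz_approximable \<Phi>"
  obtains Y where "Y 1 = y1"
    and "\<And>v. v \<in> {0..1} \<Longrightarrow> (Y has_real_derivative q v * \<Phi> (Y v) - p v) (at v within {0..1})"
proof -
  have reflect_cont: "continuous_on {0..1} (\<lambda>t. g (1 - t))" if "continuous_on {0..1} g" for g :: "real \<Rightarrow> real"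
    by (rule continuous_on_compose2[OF that]) (auto intro!: continuous_intros)
  obtain u where "u 0 = y1" and u: "\<And>t. t \<in> {0..1} \<Longrightarrow>
      (u has_real_derivative p (1 - t) - q (1 - t) * \<Phi> (u t)) (at t within {0..1})"
    using q_nonneg by (rule monotone_ode_solution[OF reflect_cont[OF p] reflect_cont[OF q] _
          \<open>mono \<Phi>\<close> \<open>lipschitz_approximable \<Phi>\<close>]) auto
  show ?thesis
  proof (rule that[of "\<lambda>v. u (1 - v)"])
    show "u (1 - 1) = y1"
      using \<open>u 0 = y1\<close> by simp
    fix v :: real assume "v \<in> {0..1}"
    then have "(u has_real_derivative p v - q v * \<Phi> (u (1 - v))) (at (0 + 1 - v) within {0..1})"
      using u[of "1 - v"] by simp
    from has_real_derivative_reflect[OF this]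
    show "((\<lambda>v. u (1 - v)) has_real_derivative q v * \<Phi> (u (1 - v)) - p v) (at v within {0..1})"
      by simp
  qed
qed

section \<open>The front equation\<close>

definition flux :: "real \<Rightarrow> real \<Rightarrow> real" where
  "flux \<epsilon> y = (if y \<le> 0 then 0 else sqrt (y * (2 * \<epsilon> + y)) / (\<epsilon> + y))"

lemma flux_nonpos [simp]: "y \<le> 0 \<Longrightarrow> flux \<epsilon> y = 0"
  by (simp add: flux_def)

lemma flux_eq_sqrt:
  assumes "\<epsilon> > 0"
  shows "flux \<epsilon> y = sqrt (1 - (\<epsilon> / (\<epsilon> + max y 0))\<^sup>2)"
proof (cases "y \<le> 0")
  case False
  then have "0 < \<epsilon> + y"
    using assms by simp
  then have "1 - (\<epsilon> / (\<epsilon> + max y 0))\<^sup>2 = ((\<epsilon> + y)\<^sup>2 - \<epsilon>\<^sup>2) / (\<epsilon> + y)\<^sup>2"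
    using False by (simp add: power_divide diff_divide_distrib)
  also have "(\<epsilon> + y)\<^sup>2 - \<epsilon>\<^sup>2 = y * (2 * \<epsilon> + y)"
    by (simp add: power2_eq_square algebra_simps)
  finally show ?thesis
    using False \<open>0 < \<epsilon> + y\<close> by (simp add: flux_def real_sqrt_divide)
qed (use assms in \<open>simp add: flux_def\<close>)

lemma mono_flux:
  assumes "\<epsilon> > 0"
  shows "mono (flux \<epsilon>)"
proof
  fix x y :: real assume "x \<le> y"
  with assms have "\<epsilon> / (\<epsilon> + max y 0) \<le> \<epsilon> / (\<epsilon> + max x 0)"
    by (intro divide_left_mono) auto
  then have "(\<epsilon> / (\<epsilon> + max y 0))\<^sup>2 \<le> (\<epsilon> / (\<epsilon> + max x 0))\<^sup>2"
    using assms by (intro power_mono) auto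
  then show "flux \<epsilon> x \<le> flux \<epsilon> y"
    unfolding flux_eq_sqrt[OF assms] by simp
qed

lemma lipschitz_on_flux_radicand:
  assumes "\<epsilon> > 0"
  shows "(2 / \<epsilon>)-lipschitz_on UNIV (\<lambda>y. 1 - (\<epsilon> / (\<epsilon> + max y 0))\<^sup>2)"
proof (rule lipschitz_onI)
  fix x y :: real
  define r where "r z = \<epsilon> / (\<epsilon> + max z 0)" for z
  have r_bounds: "0 \<le> r z" "r z \<le> 1" for z
    using assms by (auto simp: r_def)
  have denom: "0 < (\<epsilon> + max x 0) * (\<epsilon> + max y 0)"
    using assms by (intro mult_pos_pos) auto
  have "r x - r y = \<epsilon> * (max y 0 - max x 0) / ((\<epsilon> + max x 0) * (\<epsilon> + max y 0))"
    using assms by (simp add: r_def field_simps)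
  then have "\<bar>r x - r y\<bar> = \<epsilon> * \<bar>max y 0 - max x 0\<bar> / ((\<epsilon> + max x 0) * (\<epsilon> + max y 0))"
    using assms denom by (simp add: abs_mult abs_divide)
  also have "\<dots> \<le> \<epsilon> * \<bar>max y 0 - max x 0\<bar> / (\<epsilon> * \<epsilon>)"
    using assms by (intro divide_left_mono mult_mono mult_pos_pos) auto
  also have "\<dots> \<le> \<bar>x - y\<bar> / \<epsilon>"
    using assms by (simp add: divide_right_mono)
  finally have r_lip: "\<bar>r x - r y\<bar> \<le> \<bar>x - y\<bar> / \<epsilon>" .
  have "(1 - (r x)\<^sup>2) - (1 - (r y)\<^sup>2) = (r y - r x) * (r x + r y)"
    by (simp add: power2_eq_square algebra_simps)
  then have "\<bar>(1 - (r x)\<^sup>2) - (1 - (r y)\<^sup>2)\<bar> = \<bar>r x - r y\<bar> * (r x + r y)"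
    using r_bounds[of x] r_bounds[of y] by (simp add: abs_mult abs_minus_commute)
  also have "\<dots> \<le> (\<bar>x - y\<bar> / \<epsilon>) * 2"
    using r_lip r_bounds[of x] r_bounds[of y] by (intro mult_mono) auto
  finally show "dist (1 - (r x)\<^sup>2) (1 - (r y)\<^sup>2) \<le> 2 / \<epsilon> * dist x y"
    by (simp add: dist_real_def mult.commute)
qed (use assms in simp)

lemma lipschitz_approximable_sqrt:
  assumes P: "L-lipschitz_on UNIV P" and P_nonneg: "\<And>x. 0 \<le> P x"
  shows "lipschitz_approximable (\<lambda>x. sqrt (P x))"
  unfolding lipschitz_approximable_def
proof (intro allI impI exI conjI)
  fix \<delta> :: real assume "\<delta> > 0"
  show "(L / (2 * \<delta>))-lipschitz_on UNIV (\<lambda>x. sqrt (P x + \<delta>\<^sup>2))"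
  proof (rule lipschitz_onI)
    fix x y :: real
    define u v where "u = sqrt (P x + \<delta>\<^sup>2)" and "v = sqrt (P y + \<delta>\<^sup>2)"
    have "\<delta> \<le> u" "\<delta> \<le> v"
      using P_nonneg \<open>\<delta> > 0\<close> by (auto simp: u_def v_def intro: real_le_rsqrt)
    have "u\<^sup>2 = P x + \<delta>\<^sup>2" "v\<^sup>2 = P y + \<delta>\<^sup>2"
      using P_nonneg by (simp_all add: u_def v_def add_nonneg_nonneg)
    then have "(u - v) * (u + v) = P x - P y"
      by (simp add: algebra_simps power2_eq_square)
    moreover have "0 \<le> u + v"
      using \<open>\<delta> \<le> u\<close> \<open>\<delta> \<le> v\<close> \<open>\<delta> > 0\<close> by simp
    ultimately have "\<bar>u - v\<bar> * (u + v) = \<bar>P x - P y\<bar>"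
      by (metis abs_mult abs_of_nonneg)
    moreover have "\<bar>u - v\<bar> * (2 * \<delta>) \<le> \<bar>u - v\<bar> * (u + v)"
      using \<open>\<delta> \<le> u\<close> \<open>\<delta> \<le> v\<close> by (intro mult_left_mono) auto
    moreover have "\<bar>P x - P y\<bar> \<le> L * \<bar>x - y\<bar>"
      using lipschitz_onD[OF P, of x y] by (simp add: dist_real_def)
    ultimately have "\<bar>u - v\<bar> * (2 * \<delta>) \<le> L * \<bar>x - y\<bar>"
      by linarith
    then show "dist (sqrt (P x + \<delta>\<^sup>2)) (sqrt (P y + \<delta>\<^sup>2)) \<le> L / (2 * \<delta>) * dist x y"
      using \<open>\<delta> > 0\<close> by (simp add: u_def v_def dist_real_def field_simps)
  qed (use \<open>\<delta> > 0\<close> lipschitz_on_nonneg[OF P] in simp)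
  show "\<bar>sqrt (P x + \<delta>\<^sup>2) - sqrt (P x)\<bar> \<le> \<delta>" for x
    using sqrt_add_le_add_sqrt[of "P x" "\<delta>\<^sup>2"] P_nonneg[of x] \<open>\<delta> > 0\<close> by (simp add: abs_le_iff)
qed

lemma lipschitz_approximable_flux:
  assumes "\<epsilon> > 0"
  shows "lipschitz_approximable (flux \<epsilon>)"
proof -
  have "0 \<le> 1 - (\<epsilon> / (\<epsilon> + max y 0))\<^sup>2" for y
    using assms by (simp add: power_le_one_iff divide_le_eq)
  with lipschitz_approximable_sqrt[OF lipschitz_on_flux_radicand[OF assms]]
  show ?thesis
    by (simp add: flux_eq_sqrt[OF assms, abs_def])
qed

(* B v = sqrt (eps^2 + mu^2 v^2) - eps solves B' = mu * flux eps B, B 0 = 0. *)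
lemma flux_hyperbola:
  assumes "\<epsilon> > 0" and "0 \<le> \<mu>" and "0 \<le> v"
  shows "flux \<epsilon> (sqrt (\<epsilon>\<^sup>2 + \<mu>\<^sup>2 * v\<^sup>2) - \<epsilon>) = \<mu> * v / sqrt (\<epsilon>\<^sup>2 + \<mu>\<^sup>2 * v\<^sup>2)"
proof -
  define R where "R = sqrt (\<epsilon>\<^sup>2 + \<mu>\<^sup>2 * v\<^sup>2)"
  have "\<epsilon> \<le> R"
    using assms by (auto simp: R_def intro: real_le_rsqrt)
  with \<open>\<epsilon> > 0\<close> have "1 - (\<epsilon> / R)\<^sup>2 = (R\<^sup>2 - \<epsilon>\<^sup>2) / R\<^sup>2"
    by (simp add: power_divide diff_divide_distrib)
  also have "\<dots> = (\<mu> * v / R)\<^sup>2"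
    by (simp add: R_def power_divide power_mult_distrib)
  finally have "1 - (\<epsilon> / R)\<^sup>2 = (\<mu> * v / R)\<^sup>2" .
  moreover have "max (R - \<epsilon>) 0 = R - \<epsilon>"
    using \<open>\<epsilon> \<le> R\<close> by simp
  ultimately show ?thesis
    using assms \<open>\<epsilon> \<le> R\<close> unfolding R_def[symmetric] flux_eq_sqrt[OF \<open>\<epsilon> > 0\<close>] by simp
qed

lemma hyperbola_subsolution:
  assumes "\<epsilon> > 0" and "0 \<le> \<mu>" and "0 \<le> v"
    and "0 \<le> f" and "\<epsilon> * f \<le> \<mu>\<^sup>2 * v" and "f \<le> M" and "M + 2 * \<mu> \<le> a"
  shows "\<mu>\<^sup>2 * v / sqrt (\<epsilon>\<^sup>2 + \<mu>\<^sup>2 * v\<^sup>2)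
           \<le> a * flux \<epsilon> (sqrt (\<epsilon>\<^sup>2 + \<mu>\<^sup>2 * v\<^sup>2) - \<epsilon>) - f"
proof -
  define R where "R = sqrt (\<epsilon>\<^sup>2 + \<mu>\<^sup>2 * v\<^sup>2)"
  have "0 < R"
    using \<open>\<epsilon> > 0\<close> by (simp add: R_def add_pos_nonneg)
  have "R \<le> \<epsilon> + \<mu> * v"
    using sqrt_add_le_add_sqrt[of "\<epsilon>\<^sup>2" "\<mu>\<^sup>2 * v\<^sup>2"] assms
    by (simp add: R_def real_sqrt_mult)
  then have "f * R \<le> \<epsilon> * f + f * (\<mu> * v)"
    using \<open>0 \<le> f\<close> by (metis distrib_left mult.commute mult_left_mono)
  also have "\<dots> \<le> \<mu>\<^sup>2 * v + M * (\<mu> * v)"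
    using assms by (intro add_mono mult_right_mono) auto
  also have "\<dots> = \<mu> * v * (M + \<mu>)"
    by (simp add: power2_eq_square algebra_simps)
  also have "\<dots> \<le> \<mu> * v * (a - \<mu>)"
    using assms by (intro mult_left_mono) auto
  finally have "\<mu>\<^sup>2 * v + f * R \<le> a * (\<mu> * v)"
    by (simp add: power2_eq_square algebra_simps)
  with \<open>0 < R\<close> show ?thesis
    unfolding R_def[symmetric] flux_hyperbola[OF assms(1-3), folded R_def]
    by (simp add: field_simps)
qed

lemma flux_solution_nonneg:
  fixes Y a f :: "real \<Rightarrow> real"
  assumes Y: "\<And>v. v \<in> {0..1} \<Longrightarrow> (Y has_real_derivative a v * flux \<epsilon> (Y v) - f v) (at v within {0..1})"
    and "Y 1 = 0" and f_nonneg: "\<And>v. v \<in> {0..1} \<Longrightarrow> 0 \<le> f v" and v: "v \<in> {0..1}"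
  shows "0 \<le> Y v"
proof -
  have "- Y v \<le> 0"
  proof (rule DERIV_nonneg_where_pos_imp_nonpos[OF _ _ _ v])
    show "((\<lambda>v. - Y v) has_real_derivative - (a t * flux \<epsilon> (Y t) - f t)) (at t within {0..1})"
      if "t \<in> {0..1}" for t
      using Y[OF that] by (rule DERIV_minus)
    show "0 \<le> - (a t * flux \<epsilon> (Y t) - f t)" if "t \<in> {0..1}" "- Y t > 0" for t
      using that f_nonneg by simp
  qed (simp add: \<open>Y 1 = 0\<close>)
  then show ?thesis
    by simp
qed

lemma flux_solution_le_hyperbola:
  fixes Y a f :: "real \<Rightarrow> real"
  assumes Y: "\<And>v. v \<in> {0..1} \<Longrightarrow> (Y has_real_derivative a v * flux \<epsilon> (Y v) - f v) (at v within {0..1})"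
    and "Y 1 = 0" and "\<epsilon> > 0" and "0 \<le> \<mu>"
    and f_nonneg: "\<And>v. v \<in> {0..1} \<Longrightarrow> 0 \<le> f v"
    and f_lin: "\<And>v. v \<in> {0..1} \<Longrightarrow> \<epsilon> * f v \<le> \<mu>\<^sup>2 * v"
    and f_le: "\<And>v. v \<in> {0..1} \<Longrightarrow> f v \<le> M"
    and a_ge: "\<And>v. v \<in> {0..1} \<Longrightarrow> M + 2 * \<mu> \<le> a v"
    and v: "v \<in> {0..1}"
  shows "Y v \<le> sqrt (\<epsilon>\<^sup>2 + \<mu>\<^sup>2 * v\<^sup>2) - \<epsilon>"
proof -
  define B where "B v = sqrt (\<epsilon>\<^sup>2 + \<mu>\<^sup>2 * v\<^sup>2) - \<epsilon>" for v
  have "Y v - B v \<le> 0"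
  proof (rule DERIV_nonneg_where_pos_imp_nonpos[OF _ _ _ v])
    fix t :: real assume t: "t \<in> {0..1}"
    have "0 < \<epsilon>\<^sup>2 + \<mu>\<^sup>2 * t\<^sup>2"
      using \<open>\<epsilon> > 0\<close> by (simp add: add_pos_nonneg)
    then show "((\<lambda>v. Y v - B v) has_real_derivative
        (a t * flux \<epsilon> (Y t) - f t) - \<mu>\<^sup>2 * t / sqrt (\<epsilon>\<^sup>2 + \<mu>\<^sup>2 * t\<^sup>2)) (at t within {0..1})"
      unfolding B_def using Y[OF t]
      by (auto intro!: derivative_eq_intros simp: field_simps)
    assume "Y t - B t > 0"
    then have "flux \<epsilon> (B t) \<le> flux \<epsilon> (Y t)"
      using mono_flux[OF \<open>\<epsilon> > 0\<close>] by (simp add: mono_def)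
    moreover have "0 \<le> a t"
      using a_ge[OF t] f_le[OF t] f_nonneg[OF t] \<open>0 \<le> \<mu>\<close> by linarith
    ultimately have "a t * flux \<epsilon> (B t) \<le> a t * flux \<epsilon> (Y t)"
      by (rule mult_left_mono)
    with hyperbola_subsolution[OF \<open>\<epsilon> > 0\<close> \<open>0 \<le> \<mu>\<close> _ f_nonneg f_lin f_le a_ge] t
    show "0 \<le> (a t * flux \<epsilon> (Y t) - f t) - \<mu>\<^sup>2 * t / sqrt (\<epsilon>\<^sup>2 + \<mu>\<^sup>2 * t\<^sup>2)"
      by (fastforce simp: B_def)
  next
    show "Y 1 - B 1 \<le> 0"
      using \<open>Y 1 = 0\<close> \<open>\<epsilon> > 0\<close> by (simp add: B_def real_le_rsqrt)
  qed
  then show ?thesis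
    by (simp add: B_def)
qed

lemma flux_solution_pos:
  fixes Y a f :: "real \<Rightarrow> real"
  assumes Y: "(Y has_real_derivative a v * flux \<epsilon> (Y v) - f v) (at v within {0..1})"
    and Y_nonneg: "\<And>t. t \<in> {0..1} \<Longrightarrow> 0 \<le> Y t" and "0 < f v" and "0 \<le> v" "v < 1"
  shows "0 < Y v"
proof (rule ccontr)
  assume "\<not> 0 < Y v"
  with Y_nonneg \<open>0 \<le> v\<close> \<open>v < 1\<close> have "Y v = 0"
    by (simp add: order.antisym)
  with Y have "(Y has_real_derivative - f v) (at v within {0..1})"
    by simp
  then obtain d where "d > 0" and d: "\<And>h. h > 0 \<Longrightarrow> v + h \<in> {0..1} \<Longrightarrow> h < d \<Longrightarrow> Y (v + h) < Y v"
    using has_real_derivative_neg_dec_right \<open>0 < f v\<close> by (metis neg_less_0_iff_less)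
  define h where "h = min (d / 2) ((1 - v) / 2)"
  have "h \<le> d / 2" "h \<le> (1 - v) / 2"
    unfolding h_def by (rule min.cobounded1, rule min.cobounded2)
  moreover have "h > 0"
    using \<open>d > 0\<close> \<open>v < 1\<close> by (simp add: h_def)
  ultimately have "h > 0" "h < d" "v + h \<in> {0..1}"
    using \<open>0 \<le> v\<close> by auto
  with d \<open>Y v = 0\<close> Y_nonneg show False
    by fastforce
qed

lemma flux_of_nonneg: "0 \<le> y \<Longrightarrow> flux \<epsilon> y = sqrt (y * (2 * \<epsilon> + y)) / (\<epsilon> + y)"
  by (auto simp: flux_def)

lemma continuous_on_Icc_le_SUP:
  fixes g :: "real \<Rightarrow> real"
  assumes "continuous_on {a..b} g" and "v \<in> {a..b}"
  shows "g v \<le> (SUP t\<in>{a..b}. g t)"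
  using compact_continuous_image[OF assms(1) compact_Icc] assms(2)
  by (intro cSUP_upper bounded_imp_bdd_above compact_imp_bounded)

lemma continuous_on_Icc_INF_le:
  fixes g :: "real \<Rightarrow> real"
  assumes "continuous_on {a..b} g" and "v \<in> {a..b}"
  shows "(INF t\<in>{a..b}. g t) \<le> g v"
  using compact_continuous_image[OF assms(1) compact_Icc] assms(2)
  by (intro cINF_lower bounded_imp_bdd_below compact_imp_bounded)

lemma le_SUP_ratio_mul:
  fixes f :: "real \<Rightarrow> real"
  assumes "f 0 = 0" and k: "\<And>s. s \<in> {0..1} \<Longrightarrow> f s \<le> k * s" and "v \<in> {0..1}"
  shows "f v \<le> (SUP s\<in>{0<..1}. f s / s) * v"
proof (cases "v = 0")
  case False
  have "bdd_above ((\<lambda>s. f s / s) ` {0<..1})"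
    using k by (intro bdd_aboveI2[of _ _ k]) (simp add: divide_le_eq)
  with False \<open>v \<in> {0..1}\<close> have "f v / v \<le> (SUP s\<in>{0<..1}. f s / s)"
    by (intro cSUP_upper) auto
  with False \<open>v \<in> {0..1}\<close> show ?thesis
    by (simp add: divide_le_eq)
qed (simp add: \<open>f 0 = 0\<close>)

lemma front_solution_exists:
  fixes f a :: "real \<Rightarrow> real"
  assumes f: "continuous_on {0..1} f" and a: "continuous_on {0..1} a"
    and "\<epsilon> > 0" and "0 \<le> \<mu>"
    and f_nonneg: "\<And>v. v \<in> {0..1} \<Longrightarrow> 0 \<le> f v"
    and f_pos: "\<And>v. 0 < v \<Longrightarrow> v < 1 \<Longrightarrow> 0 < f v"
    and f_lin: "\<And>v. v \<in> {0..1} \<Longrightarrow> \<epsilon> * f v \<le> \<mu>\<^sup>2 * v"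
    and f_le: "\<And>v. v \<in> {0..1} \<Longrightarrow> f v \<le> M"
    and a_ge: "\<And>v. v \<in> {0..1} \<Longrightarrow> M + 2 * \<mu> \<le> a v"
  obtains Y where
    "\<And>v. v \<in> {0..1} \<Longrightarrow> (Y has_real_derivative a v * flux \<epsilon> (Y v) - f v) (at v within {0..1})"
    and "Y 0 = 0" and "Y 1 = 0" and "\<And>v. 0 < v \<Longrightarrow> v < 1 \<Longrightarrow> 0 < Y v"
proof -
  have "0 \<le> a v" if "v \<in> {0..1}" for v
    using a_ge[OF that] f_le[OF that] f_nonneg[OF that] \<open>0 \<le> \<mu>\<close> by linarith
  then obtain Y where "Y 1 = 0" and Y: "\<And>v. v \<in> {0..1} \<Longrightarrow>
      (Y has_real_derivative a v * flux \<epsilon> (Y v) - f v) (at v within {0..1})"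
    using monotone_ode_terminal_solution[OF f a _ mono_flux lipschitz_approximable_flux] \<open>\<epsilon> > 0\<close>
    by metis
  have Y_nonneg: "0 \<le> Y v" if "v \<in> {0..1}" for v
    using flux_solution_nonneg[OF Y \<open>Y 1 = 0\<close> f_nonneg that] .
  have "Y 0 \<le> 0"
    using flux_solution_le_hyperbola[OF Y \<open>Y 1 = 0\<close> \<open>\<epsilon> > 0\<close> \<open>0 \<le> \<mu>\<close> f_nonneg f_lin f_le a_ge,
        of 0] \<open>\<epsilon> > 0\<close> by simp
  show ?thesis
  proof (rule that[OF Y _ \<open>Y 1 = 0\<close>])
    show "Y 0 = 0"
      using \<open>Y 0 \<le> 0\<close> Y_nonneg[of 0] by simp
    show "0 < Y v" if "0 < v" "v < 1" for v
      using that by (intro flux_solution_pos[OF Y Y_nonneg f_pos]) auto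
  qed
qed

theorem lemma2:
  fixes f h dh :: "real \<Rightarrow> real" and \<epsilon> c :: real
  assumes f_cont: "continuous_on {0..1} f"
    and f0: "f 0 = 0" and f1: "f 1 = 0"
    and f_pos: "\<And>s. 0 < s \<Longrightarrow> s < 1 \<Longrightarrow> f s > 0"
    and f_k: "\<exists>k>0. \<forall>s\<in>{0..1}. f s \<le> k * s \<and> f s \<le> k * (1 - s)"
    and h_deriv: "\<And>v. v \<in> {0..1} \<Longrightarrow> (h has_real_derivative dh v) (at v within {0..1})"
    and h_C2: "\<exists>d2h. (\<forall>v\<in>{0..1}. (dh has_real_derivative d2h v) (at v within {0..1}))
                     \<and> continuous_on {0..1} d2h"
    and h0: "h 0 = 0" and dh0: "dh 0 = 0"
    and eps: "\<epsilon> > 0"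
    and c_ge: "c \<ge> (SUP v\<in>{0..1}. f v) - (INF v\<in>{0..1}. dh v)
                   + 2 * sqrt (\<epsilon> * (SUP v\<in>{0<..1}. f v / v))"
  shows "\<exists>y :: real \<Rightarrow> real.
           (\<forall>v\<in>{0..1}. (y has_real_derivative
               ((c + dh v) * sqrt (y v * (2 * \<epsilon> + y v)) / (\<epsilon> + y v) - f v))
               (at v within {0..1}))
           \<and> y 0 = 0 \<and> y 1 = 0 \<and> (\<forall>v. 0 < v \<and> v < 1 \<longrightarrow> y v > 0)"
proof -
  obtain k where k: "\<And>s. s \<in> {0..1} \<Longrightarrow> f s \<le> k * s"
    using f_k by blast
  have f_nonneg: "0 \<le> f v" if "v \<in> {0..1}" for v
    using that f0 f1 f_pos[of v] by (cases "v = 0 \<or> v = 1") auto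
  have dh_cont: "continuous_on {0..1} dh"
    using h_C2 DERIV_continuous_on by blast
  define L where "L = (SUP v\<in>{0<..1}. f v / v)"
  have f_le_L: "f v \<le> L * v" if "v \<in> {0..1}" for v
    unfolding L_def using f0 k that by (rule le_SUP_ratio_mul)
  have "0 \<le> L"
    using f_le_L[of "1/2"] f_pos[of "1/2"] by simp
  obtain y where y: "\<And>v. v \<in> {0..1} \<Longrightarrow>
      (y has_real_derivative (c + dh v) * flux \<epsilon> (y v) - f v) (at v within {0..1})"
    and "y 0 = 0" "y 1 = 0" and y_pos: "\<And>v. 0 < v \<Longrightarrow> v < 1 \<Longrightarrow> 0 < y v"
  proof (rule front_solution_exists[OF f_cont _ eps _ f_nonneg f_pos _
        continuous_on_Icc_le_SUP[OF f_cont]])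
    show "continuous_on {0..1} (\<lambda>v. c + dh v)"
      by (intro continuous_intros dh_cont)
    show "\<epsilon> * f v \<le> (sqrt (\<epsilon> * L))\<^sup>2 * v" if "v \<in> {0..1}" for v
      using f_le_L[OF that] eps \<open>0 \<le> L\<close> by simp
    show "(SUP v\<in>{0..1}. f v) + 2 * sqrt (\<epsilon> * L) \<le> c + dh v" if "v \<in> {0..1}" for v
      using c_ge continuous_on_Icc_INF_le[OF dh_cont that] unfolding L_def by linarith
  qed (use eps \<open>0 \<le> L\<close> in auto)
  have "0 \<le> y v" if "v \<in> {0..1}" for v
    using that \<open>y 0 = 0\<close> \<open>y 1 = 0\<close> y_pos[of v] by (cases "v = 0 \<or> v = 1") auto
  with y \<open>y 0 = 0\<close> \<open>y 1 = 0\<close> y_pos show ?thesis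
    by (intro exI[of _ y]) (simp add: flux_of_nonneg)
qed

end
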